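(* Let $\epsilon_1, \epsilon_2, c \in (0, 1)$. Suppose that a maximization problem admits a polynomial-time $c$-approximation algorithm and a $(1 - \epsilon_1, \epsilon_2)$-APPA $(\mathcal{A}, \mathcal{B})$. Then it admits a $(1 - \epsilon_1 - \epsilon_2 / c)$-APPA whose reduction algorithm is $\mathcal{A}$.
   Context: For a parameterized maximization problem with instances $(I,k)$ and optimum value $\mathrm{OPT}(I,k)$, a solution is $\beta$-approximate if its value is at least $\beta \cdot \mathrm{OPT}(I,k)$. An $\alpha$-APPA (approximate polynomial-time pre-processing algorithm) is a pair of polynomial-time algorithms $(\mathcal{A}, \mathcal{B})$ (reduction and solution-lifting algorithm): given an instance $(I, k)$, $\mathcal{A}$ outputs an instance $(I', k')$ of the same problem, and given any $\beta$-approximate solution of $(I', k')$, $\mathcal{B}$ outputs an $\alpha\beta$-approximate solution of $(I, k)$. An $(\alpha, \gamma)$-APPA is defined identically except that $\mathcal{B}$ is only required to output an $(\alpha\beta - \gamma)$-approximate solution of $(I,k)$, i.e. one of value at least $(\alpha\beta-\gamma)\mathrm{OPT}(I,k)$. A $c$-approximation algorithm outputs a $c$-approximate solution. *)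

theory Defs
  imports Main "HOL.Real"
begin

text \<open>A (parameterized) maximization problem over instances of type 'x
(an instance is a pair (I,k), kept abstract) and solutions of type 's:
F x is the set of feasible solutions of instance x and v x s the value of s.\<close>

definition max_problem :: "('x \<Rightarrow> 's set) \<Rightarrow> ('x \<Rightarrow> 's \<Rightarrow> real) \<Rightarrow> bool" where
  "max_problem F v \<longleftrightarrow>
     (\<forall>x. \<forall>s\<in>F x. 0 \<le> v x s) \<and> (\<forall>x. \<exists>s\<in>F x. \<forall>t\<in>F x. v x t \<le> v x s)"

definition OPT :: "('x \<Rightarrow> 's set) \<Rightarrow> ('x \<Rightarrow> 's \<Rightarrow> real) \<Rightarrow> 'x \<Rightarrow> real" where
  "OPT F v x = (SUP s\<in>F x. v x s)"

definition approx_sol :: "('x \<Rightarrow> 's set) \<Rightarrow> ('x \<Rightarrow> 's \<Rightarrow> real) \<Rightarrow> real \<Rightarrow> 'x \<Rightarrow> 's \<Rightarrow> bool" where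
  "approx_sol F v \<beta> x s \<longleftrightarrow> s \<in> F x \<and> \<beta> * OPT F v x \<le> v x s"

text \<open>Polynomial-time computability is modelled abstractly by predicates
ptr (reduction algorithms), ptl (solution-lifting algorithms, which receive the
original instance and a solution of the reduced instance) and pta (algorithms
mapping instances to solutions).\<close>

definition APPA2 ::
  "('x \<Rightarrow> 's set) \<Rightarrow> ('x \<Rightarrow> 's \<Rightarrow> real) \<Rightarrow> (('x \<Rightarrow> 'x) \<Rightarrow> bool) \<Rightarrow> (('x \<Rightarrow> 's \<Rightarrow> 's) \<Rightarrow> bool)
   \<Rightarrow> real \<Rightarrow> real \<Rightarrow> ('x \<Rightarrow> 'x) \<Rightarrow> ('x \<Rightarrow> 's \<Rightarrow> 's) \<Rightarrow> bool" where
  "APPA2 F v ptr ptl \<alpha> \<gamma> A B \<longleftrightarrow> ptr A \<and> ptl B \<and>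
     (\<forall>x \<beta> s. 0 < \<beta> \<longrightarrow> \<beta> \<le> 1 \<longrightarrow> approx_sol F v \<beta> (A x) s \<longrightarrow> approx_sol F v (\<alpha> * \<beta> - \<gamma>) x (B x s))"

definition APPA ::
  "('x \<Rightarrow> 's set) \<Rightarrow> ('x \<Rightarrow> 's \<Rightarrow> real) \<Rightarrow> (('x \<Rightarrow> 'x) \<Rightarrow> bool) \<Rightarrow> (('x \<Rightarrow> 's \<Rightarrow> 's) \<Rightarrow> bool)
   \<Rightarrow> real \<Rightarrow> ('x \<Rightarrow> 'x) \<Rightarrow> ('x \<Rightarrow> 's \<Rightarrow> 's) \<Rightarrow> bool" where
  "APPA F v ptr ptl \<alpha> A B \<longleftrightarrow> ptr A \<and> ptl B \<and>
     (\<forall>x \<beta> s. 0 < \<beta> \<longrightarrow> \<beta> \<le> 1 \<longrightarrow> approx_sol F v \<beta> (A x) s \<longrightarrow> approx_sol F v (\<alpha> * \<beta>) x (B x s))"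

definition approx_alg ::
  "('x \<Rightarrow> 's set) \<Rightarrow> ('x \<Rightarrow> 's \<Rightarrow> real) \<Rightarrow> (('x \<Rightarrow> 's) \<Rightarrow> bool) \<Rightarrow> real \<Rightarrow> ('x \<Rightarrow> 's) \<Rightarrow> bool" where
  "approx_alg F v pta c C \<longleftrightarrow> pta C \<and> (\<forall>x. approx_sol F v c x (C x))"

text \<open>Closure properties of polynomial time used for solution lifting:
an instance-to-solution algorithm may be used as a lifting algorithm (ignoring
the given solution), and running two lifting algorithms and returning the output
of larger value (the value function being polynomial-time computable) is again
polynomial time.\<close>
definition ptime_closed ::
  "('x \<Rightarrow> 's \<Rightarrow> real) \<Rightarrow> (('x \<Rightarrow> 's \<Rightarrow> 's) \<Rightarrow> bool) \<Rightarrow> (('x \<Rightarrow> 's) \<Rightarrow> bool) \<Rightarrow> bool" where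
  "ptime_closed v ptl pta \<longleftrightarrow>
     (\<forall>C. pta C \<longrightarrow> ptl (\<lambda>x s. C x)) \<and>
     (\<forall>f g. ptl f \<longrightarrow> ptl g \<longrightarrow>
        ptl (\<lambda>x s. if v x (g x s) \<le> v x (f x s) then f x s else g x s))"

end

theory Submission
  imports Defs
begin

text \<open>Run the lifting algorithm B and the c-approximation algorithm C and keep the better
output. If the reduced solution is beta-approximate with beta \<ge> c, the additive loss
\<epsilon>2 of B is at most (\<epsilon>2 / c) beta, so B alone is (1 - \<epsilon>1 - \<epsilon>2 / c) beta-approximate;
if beta < c, then C alone is already beta-approximate.\<close>

lemma OPT_nonneg:
  assumes "max_problem F v"
  shows "0 \<le> OPT F v x"
proof -
  from assms obtain s where s: "s \<in> F x" "\<forall>t\<in>F x. v x t \<le> v x s" "0 \<le> v x s"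
    unfolding max_problem_def by blast
  have "bdd_above (v x ` F x)" using s by (auto intro!: bdd_aboveI2)
  then have "v x s \<le> OPT F v x" unfolding OPT_def using s(1) by (rule cSUP_upper2) simp
  with s(3) show ?thesis by linarith
qed

lemma approx_sol_mono:
  assumes "\<gamma> \<le> \<beta>" "approx_sol F v \<beta> x s" "0 \<le> OPT F v x"
  shows "approx_sol F v \<gamma> x s"
  using assms mult_right_mono[OF \<open>\<gamma> \<le> \<beta>\<close> \<open>0 \<le> OPT F v x\<close>]
  unfolding approx_sol_def by linarith

lemma approx_sol_better_of:
  assumes "approx_sol F v \<beta> x s" "approx_sol F v \<beta>' x t" "\<gamma> \<le> max \<beta> \<beta>'"
    and "0 \<le> OPT F v x"
  shows "approx_sol F v \<gamma> x (if v x t \<le> v x s then s else t)"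
proof (cases "\<gamma> \<le> \<beta>")
  case True
  then have "approx_sol F v \<gamma> x s" using assms(1,4) by (rule approx_sol_mono)
  moreover have "approx_sol F v \<gamma> x t" if "v x s < v x t"
    using \<open>approx_sol F v \<gamma> x s\<close> that assms(2) unfolding approx_sol_def by linarith
  ultimately show ?thesis by auto
next
  case False
  then have "\<gamma> \<le> \<beta>'" using assms(3) by (simp add: le_max_iff_disj)
  then have "approx_sol F v \<gamma> x t" using assms(2,4) by (rule approx_sol_mono)
  moreover have "approx_sol F v \<gamma> x s" if "v x t \<le> v x s"
    using \<open>approx_sol F v \<gamma> x t\<close> that assms(1) unfolding approx_sol_def by linarith
  ultimately show ?thesis by auto
qed

lemma APPA_of_APPA2_and_approx_alg:
  assumes "max_problem F v" "ptime_closed v ptl pta"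
    and "approx_alg F v pta c C" "APPA2 F v ptr ptl \<alpha> \<gamma> A B"
    and factor: "\<And>\<beta>. 0 < \<beta> \<Longrightarrow> \<beta> \<le> 1 \<Longrightarrow> \<delta> * \<beta> \<le> max (\<alpha> * \<beta> - \<gamma>) c"
  shows "APPA F v ptr ptl \<delta> A (\<lambda>x s. if v x (C x) \<le> v x (B x s) then B x s else C x)"
  unfolding APPA_def
proof (intro conjI allI impI)
  show "ptr A" using \<open>APPA2 F v ptr ptl \<alpha> \<gamma> A B\<close> unfolding APPA2_def by blast
  have "ptl B" "pta C"
    using \<open>APPA2 F v ptr ptl \<alpha> \<gamma> A B\<close> \<open>approx_alg F v pta c C\<close>
    unfolding APPA2_def approx_alg_def by blast+
  then show "ptl (\<lambda>x s. if v x (C x) \<le> v x (B x s) then B x s else C x)"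
    using \<open>ptime_closed v ptl pta\<close> unfolding ptime_closed_def by blast
  fix x \<beta> s
  assume "0 < \<beta>" "\<beta> \<le> 1" "approx_sol F v \<beta> (A x) s"
  then have "approx_sol F v (\<alpha> * \<beta> - \<gamma>) x (B x s)"
    using \<open>APPA2 F v ptr ptl \<alpha> \<gamma> A B\<close> unfolding APPA2_def by blast
  moreover have "approx_sol F v c x (C x)"
    using \<open>approx_alg F v pta c C\<close> unfolding approx_alg_def by blast
  ultimately show "approx_sol F v (\<delta> * \<beta>) x (if v x (C x) \<le> v x (B x s) then B x s else C x)"
    using factor[OF \<open>0 < \<beta>\<close> \<open>\<beta> \<le> 1\<close>] OPT_nonneg[OF \<open>max_problem F v\<close>]
    by (rule approx_sol_better_of)
qed

lemma additive_loss_le_max: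
  fixes \<epsilon>1 \<epsilon>2 c \<beta> :: real
  assumes "0 < c" "0 \<le> \<epsilon>1" "0 \<le> \<epsilon>2" "0 \<le> \<beta>"
  shows "(1 - \<epsilon>1 - \<epsilon>2 / c) * \<beta> \<le> max ((1 - \<epsilon>1) * \<beta> - \<epsilon>2) c"
proof (cases "c \<le> \<beta>")
  case True
  then have "\<epsilon>2 * c \<le> \<epsilon>2 * \<beta>"
    using \<open>0 \<le> \<epsilon>2\<close> by (rule mult_left_mono)
  then have "\<epsilon>2 \<le> \<epsilon>2 / c * \<beta>"
    using \<open>0 < c\<close> by (simp add: field_simps mult.commute)
  then show ?thesis by (simp add: algebra_simps)
next
  case False
  have "0 \<le> (\<epsilon>1 + \<epsilon>2 / c) * \<beta>" using assms by simp
  then show ?thesis using False by (simp add: algebra_simps)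
qed

theorem lemma2p1:
  fixes F :: "'x \<Rightarrow> 's set" and v :: "'x \<Rightarrow> 's \<Rightarrow> real"
    and ptr :: "('x \<Rightarrow> 'x) \<Rightarrow> bool" and ptl :: "('x \<Rightarrow> 's \<Rightarrow> 's) \<Rightarrow> bool"
    and pta :: "('x \<Rightarrow> 's) \<Rightarrow> bool"
    and \<epsilon>1 \<epsilon>2 c :: real and A :: "'x \<Rightarrow> 'x" and B :: "'x \<Rightarrow> 's \<Rightarrow> 's" and C :: "'x \<Rightarrow> 's"
  assumes "max_problem F v"
    and "ptime_closed v ptl pta"
    and "0 < \<epsilon>1" "\<epsilon>1 < 1" "0 < \<epsilon>2" "\<epsilon>2 < 1" "0 < c" "c < 1"
    and "approx_alg F v pta c C"
    and "APPA2 F v ptr ptl (1 - \<epsilon>1) \<epsilon>2 A B"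
  shows "\<exists>B'. APPA F v ptr ptl (1 - \<epsilon>1 - \<epsilon>2 / c) A B'"
proof -
  have "(1 - \<epsilon>1 - \<epsilon>2 / c) * \<beta> \<le> max ((1 - \<epsilon>1) * \<beta> - \<epsilon>2) c" if "0 < \<beta>" for \<beta>
    using additive_loss_le_max \<open>0 < c\<close> \<open>0 < \<epsilon>1\<close> \<open>0 < \<epsilon>2\<close> that by simp
  then show ?thesis
    using APPA_of_APPA2_and_approx_alg[OF assms(1,2,9,10)] by blast
qed

end
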